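(* Let $g\in\mathbb{I}_{\geq1}$, $c\in\mathbb{I}_{\geq g}$, $b\in\mathbb{I}_{\geq c}$ be integers with $q:=\lceil c/g\rceil\geq2$ and $(q-1)g\leq b$, and let $\psi>0$, $\ell_\beta(\beta):=\psi(b^2-\beta^2)$. Let $\mathbb{X}_p\subseteq\mathbb{R}^{n_p}$, $\mathbb{U}_p\subseteq\mathbb{R}^{m_p}$ be closed sets containing the origin, $f_p:\mathbb{R}^{n_p}\times\mathbb{R}^{m_p}\to\mathbb{R}^{n_p}$ with $f_p(0,0)=0$, $\mathbb{X}_{f,p}\subseteq\mathbb{X}_p$, and $k_p:\mathbb{X}_{f,p}\to\mathbb{U}_p$. Consider the system $x^+=f(x,u)$ with state $x=(x_p,u_s,\beta)$, input $u=(u_c,\gamma,\delta)$, $\gamma,\delta\in\{0,1\}$, $\gamma+\delta\leq 1$, $$f(x,u)=\big(f_p(x_p,(\gamma+\delta)u_c+(1-\gamma-\delta)u_s),\ (\gamma+\delta)u_c+(1-\gamma-\delta)u_s,\ \min\{\beta+(1-\delta)g-\gamma c,\,b\}\big),$$ the terminal control sequence $\kappa_0(x):=(k_p(x_p),0,1)$, $\kappa_j(x):=(0,0,0)$ for $j\in\mathbb{I}_{[1,q-1]}$, $f_0(x):=x$, $f_i(x):=f(f_{i-1}(x),\kappa_{(i-1)\bmod q}(f_{i-1}(x)))$, and let $f_{\beta,i}(x)$ be the last component of $f_i(x)$. Then for every $x\in\mathbb{X}_{f,p}\times\mathbb{U}_p\times\{0\}$, $$\sum_{i=0}^{q-1}\ell_\beta(f_{\beta,i}(x))=\psi\Big(qb^2-\tfrac16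 g^2(q-1)(q-2)(2q-3)\Big).$$
   Context: $\mathbb{I}$ denotes the integers, $\mathbb{I}_{[a,b]}:=\mathbb{I}\cap[a,b]$, $\mathbb{I}_{\geq a}:=\mathbb{I}\cap[a,\infty)$. The component $\beta$ is a token bucket level; $\gamma=1$ is a token-consuming transmission and $\delta=1$ a transmission over a direct link that consumes no tokens and during which no tokens are added. *)

theory Defs
  imports "HOL-Analysis.Analysis"
begin

definition sysf ::
  "('a::real_vector \<Rightarrow> 'b::real_vector \<Rightarrow> 'a) \<Rightarrow> int \<Rightarrow> int \<Rightarrow> int \<Rightarrow>
   ('a \<times> 'b \<times> real) \<Rightarrow> ('b \<times> real \<times> real) \<Rightarrow> ('a \<times> 'b \<times> real)" where
  "sysf fp g c b x u =
     (case x of (xp, us, \<beta>) \<Rightarrow> case u of (uc, \<gamma>, \<delta>) \<Rightarrow>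
        (let v = (\<gamma> + \<delta>) *\<^sub>R uc + (1 - \<gamma> - \<delta>) *\<^sub>R us
         in (fp xp v, v, min (\<beta> + (1 - \<delta>) * real_of_int g - \<gamma> * real_of_int c) (real_of_int b))))"

definition kappa :: "('a \<Rightarrow> 'b::real_vector) \<Rightarrow> nat \<Rightarrow> ('a \<times> 'b \<times> real) \<Rightarrow> ('b \<times> real \<times> real)" where
  "kappa kp j x = (if j = 0 then (kp (fst x), 0, 1) else (0, 0, 0))"

primrec traj ::
  "('a::real_vector \<Rightarrow> 'b::real_vector \<Rightarrow> 'a) \<Rightarrow> ('a \<Rightarrow> 'b) \<Rightarrow> int \<Rightarrow> int \<Rightarrow> int \<Rightarrow> nat \<Rightarrow> nat \<Rightarrow>
   ('a \<times> 'b \<times> real) \<Rightarrow> ('a \<times> 'b \<times> real)" where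
  "traj fp kp g c b q 0 x = x"
| "traj fp kp g c b q (Suc i) x =
     sysf fp g c b (traj fp kp g c b q i x) (kappa kp (i mod q) (traj fp kp g c b q i x))"

definition ell_beta :: "real \<Rightarrow> int \<Rightarrow> real \<Rightarrow> real" where
  "ell_beta \<psi> b \<beta> = \<psi> * ((real_of_int b)\<^sup>2 - \<beta>\<^sup>2)"

end

theory Submission
  imports Defs
begin

text \<open>Under the terminal control sequence no token is ever consumed: the first step transmits
  over the direct link and leaves the empty bucket empty, and each of the following idle steps adds
  g tokens. Since (q - 1) g \<le> b the saturation at b never binds, so the bucket level at time
  i < q is (i - 1) g (truncated at 0), and the stage costs sum to
  \<psi> (q b^2 - g^2 (0^2 + 0^2 + 1^2 + ... + (q - 2)^2)).\<close>

lemma sum_sq_pred_lessThan: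
  assumes "n \<ge> 1"
  shows "(\<Sum>i<n. (real (i - 1))\<^sup>2) = (real n - 1) * (real n - 2) * (2 * real n - 3) / 6"
  using assms
proof (induction n rule: dec_induct)
  case base
  then show ?case by simp
next
  case (step n)
  have "(\<Sum>i<Suc n. (real (i - 1))\<^sup>2) = (\<Sum>i<n. (real (i - 1))\<^sup>2) + (real n - 1)\<^sup>2"
    using \<open>1 \<le> n\<close> by (simp add: of_nat_diff)
  also have "\<dots> = (real (Suc n) - 1) * (real (Suc n) - 2) * (2 * real (Suc n) - 3) / 6"
    using step.IH by (simp add: field_simps power2_eq_square)
  finally show ?case .
qed

lemma bucket_sysf_kappa_0:
  "snd (snd (sysf fp g c b x (kappa kp 0 x))) = min (snd (snd x)) (real_of_int b)"
  by (simp add: sysf_def kappa_def Let_def split: prod.splits)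

lemma bucket_sysf_kappa_Suc:
  "snd (snd (sysf fp g c b x (kappa kp (Suc j) x)))
     = min (snd (snd x) + real_of_int g) (real_of_int b)"
  by (simp add: sysf_def kappa_def Let_def split: prod.splits)

lemma bucket_traj_from_empty:
  assumes "g \<ge> 0" and "(int q - 1) * g \<le> b" and "snd (snd x) = 0" and "i < q"
  shows "snd (snd (traj fp kp g c b q i x)) = real (i - 1) * real_of_int g"
  using \<open>i < q\<close>
proof (induction i)
  case 0
  then show ?case using \<open>snd (snd x) = 0\<close> by simp
next
  case (Suc i)
  have no_overflow: "int i * g \<le> b"
  proof -
    have "int i * g \<le> (int q - 1) * g"
      using Suc.prems \<open>g \<ge> 0\<close> by (intro mult_right_mono) auto
    with assms(2) show ?thesis by linarith
  qed
  have level: "snd (snd (traj fp kp g c b q i x)) = real (i - 1) * real_of_int g"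
    using Suc by simp
  have "i mod q = i" using Suc.prems by simp
  show ?case
  proof (cases i)
    case 0
    then show ?thesis
      using \<open>i mod q = i\<close> level no_overflow \<open>g \<ge> 0\<close> by (simp add: bucket_sysf_kappa_0)
  next
    case (Suc j)
    have "real_of_int (int i * g) \<le> real_of_int b"
      using no_overflow by (simp only: of_int_le_iff)
    then show ?thesis
      using \<open>i mod q = i\<close> level Suc by (simp add: bucket_sysf_kappa_Suc algebra_simps)
  qed
qed

text \<open>Only the bucket component enters the cost.\<close>

theorem lemma4:
  fixes g c b :: int and q :: nat and \<psi> :: real
    and Xp :: "(real^'n) set" and Up :: "(real^'m) set"
    and fp :: "real^'n \<Rightarrow> real^'m \<Rightarrow> real^'n"
    and Xf :: "(real^'n) set" and kp :: "real^'n \<Rightarrow> real^'m"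
    and x :: "(real^'n) \<times> (real^'m) \<times> real"
  assumes "g \<ge> 1" and "c \<ge> g" and "b \<ge> c"
    and q_def: "q = nat \<lceil>real_of_int c / real_of_int g\<rceil>" and "q \<ge> 2"
    and "(int q - 1) * g \<le> b"
    and "\<psi> > 0"
    and "closed Xp" and "closed Up" and "0 \<in> Xp" and "0 \<in> Up"
    and "fp 0 0 = 0"
    and "Xf \<subseteq> Xp" and "\<forall>y\<in>Xf. kp y \<in> Up"
    and "x \<in> Xf \<times> Up \<times> {0}"
  shows "(\<Sum>i<q. ell_beta \<psi> b (snd (snd (traj fp kp g c b q i x))))
         = \<psi> * (real q * (real_of_int b)\<^sup>2
               - (1/6) * (real_of_int g)\<^sup>2 * (real q - 1) * (real q - 2) * (2 * real q - 3))"
proof -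
  have "snd (snd x) = 0" using \<open>x \<in> Xf \<times> Up \<times> {0}\<close> by auto
  then have "(\<Sum>i<q. ell_beta \<psi> b (snd (snd (traj fp kp g c b q i x))))
      = (\<Sum>i<q. \<psi> * (real_of_int b)\<^sup>2 - \<psi> * (real_of_int g)\<^sup>2 * (real (i - 1))\<^sup>2)"
    using \<open>g \<ge> 1\<close> \<open>(int q - 1) * g \<le> b\<close>
    by (intro sum.cong)
      (simp_all add: bucket_traj_from_empty ell_beta_def power_mult_distrib algebra_simps)
  also have "\<dots> = real q * (\<psi> * (real_of_int b)\<^sup>2)
                  - \<psi> * (real_of_int g)\<^sup>2 * (\<Sum>i<q. (real (i - 1))\<^sup>2)"
    by (simp add: sum_subtractf sum_distrib_left)
  also have "\<dots> = \<psi> * (real q * (real_of_int b)\<^sup>2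
               - (1/6) * (real_of_int g)\<^sup>2 * (real q - 1) * (real q - 2) * (2 * real q - 3))"
    using \<open>q \<ge> 2\<close> by (subst sum_sq_pred_lessThan) (simp_all add: algebra_simps)
  finally show ?thesis .
qed

end
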